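(* If $f_i=h_i+\overline{g_i}\in S_H$ with $h_i(z)+g_i(z)=\dfrac{z}{1-z}$ for $i=1,2$, then for every $0\le t\le1$ the map $f=tf_1+(1-t)f_2$ belongs to $S_H$ and maps $E$ onto a domain convex in the direction of the imaginary axis.
   Context: $E=\{z\in\mathbb{C}:|z|<1\}$. $S_H$ denotes the class of harmonic, univalent, sense-preserving mappings $f=h+\overline{g}$ of $E$ ($h,g$ analytic, $h'\ne0$, $|g'/h'|<1$) normalized by $f(0)=0$, $f_z(0)=1$. A domain $\Omega$ is convex in the direction of the imaginary axis if every line parallel to the imaginary axis has connected or empty intersection with $\Omega$. *)

theory Defs
  imports "HOL-Analysis.Analysis"
begin

abbreviation unit_disk :: "complex set" where
  "unit_disk \<equiv> ball 0 1"

definition harm :: "(complex \<Rightarrow> complex) \<Rightarrow> (complex \<Rightarrow> complex) \<Rightarrow> complex \<Rightarrow> complex" where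
  "harm h g = (\<lambda>z. h z + cnj (g z))"

definition SH_pair :: "(complex \<Rightarrow> complex) \<Rightarrow> (complex \<Rightarrow> complex) \<Rightarrow> bool" where
  "SH_pair h g \<longleftrightarrow>
     h holomorphic_on unit_disk \<and> g holomorphic_on unit_disk \<and>
     (\<forall>z\<in>unit_disk. deriv h z \<noteq> 0 \<and> norm (deriv g z / deriv h z) < 1) \<and>
     inj_on (harm h g) unit_disk \<and>
     harm h g 0 = 0 \<and> deriv h 0 = 1"

definition S_H :: "(complex \<Rightarrow> complex) set" where
  "S_H = {f. \<exists>h g. SH_pair h g \<and> (\<forall>z\<in>unit_disk. f z = harm h g z)}"

definition convex_imag_dir :: "complex set \<Rightarrow> bool" where
  "convex_imag_dir \<Omega> \<longleftrightarrow> (\<forall>x::real. connected (\<Omega> \<inter> {w. Re w = x}))"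

end

theory Submission
  imports Defs
begin

text \<open>The map \<open>\<phi>(z) = z/(1 - z)\<close> sends the disk bijectively onto the half-plane
  \<open>Re w > -1/2\<close>. If \<open>h + g = \<phi>\<close>, then \<open>f = h + conj g\<close> satisfies \<open>Re f = Re \<phi>\<close> and
  \<open>Im f = Im (h - g)\<close>, and with \<open>q = h'(z) (1 - z)^2\<close> one has \<open>g'(z) (1 - z)^2 = 1 - q\<close>;
  so \<open>|g'| < |h'|\<close> says exactly \<open>Re q > 1/2\<close>, a condition that is convex in \<open>h\<close> and hence
  survives the convex combination. In half-plane coordinates \<open>w = \<phi>(z)\<close> the function
  \<open>h - g\<close> has derivative \<open>2q - 1\<close>, of positive real part, so \<open>Im f\<close> increases strictly
  along each vertical line: \<open>f\<close> is univalent and its vertical sections are connected.\<close>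

lemma norm_one_minus_less_norm_iff: "cmod (1 - q) < cmod q \<longleftrightarrow> Re q > 1/2"
proof -
  have "cmod (1 - q) < cmod q \<longleftrightarrow> (cmod (1 - q))\<^sup>2 < (cmod q)\<^sup>2"
    by (metis norm_ge_zero power_less_imp_less_base power_strict_mono pos2)
  also have "\<dots> \<longleftrightarrow> Re q > 1/2"
    unfolding cmod_power2 by (simp add: power2_eq_square algebra_simps)
  finally show ?thesis .
qed

lemma dilatation_less_one_iff:
  fixes a b c :: complex
  assumes "(a + b) * c = 1"
  shows "a \<noteq> 0 \<and> cmod (b / a) < 1 \<longleftrightarrow> Re (a * c) > 1/2"
proof -
  have c: "c \<noteq> 0" using assms by auto
  have bc: "b * c = 1 - a * c" using assms by (simp add: algebra_simps)
  have "a \<noteq> 0 \<and> cmod (b / a) < 1 \<longleftrightarrow> a * c \<noteq> 0 \<and> cmod (b * c) < cmod (a * c)"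
    using c by (auto simp: norm_divide norm_mult divide_less_eq)
  also have "\<dots> \<longleftrightarrow> cmod (1 - a * c) < cmod (a * c)"
    unfolding bc by auto
  finally show ?thesis by (simp add: norm_one_minus_less_norm_iff)
qed

lemma Re_div_one_minus_gt:
  assumes "cmod z < 1"
  shows "Re (z / (1 - z)) > -1/2"
proof -
  have n: "(Re z)\<^sup>2 + (Im z)\<^sup>2 < 1"
    using assms cmod_power2[of z] power_strict_mono[of "cmod z" 1 2] by simp
  have "Re z < 1" using assms abs_Re_le_cmod[of z] by linarith
  hence d: "(1 - Re z)\<^sup>2 + (Im z)\<^sup>2 > 0" by (intro add_pos_nonneg) auto
  have "-1/2 * ((1 - Re z)\<^sup>2 + (Im z)\<^sup>2) < Re z * (1 - Re z) - Im z * Im z"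
    using n by (simp add: power2_eq_square algebra_simps)
  with d show ?thesis
    by (simp add: Re_divide power2_eq_square less_divide_eq)
qed

lemma div_one_plus_mem_unit_disk:
  assumes "Re w > -1/2"
  shows "w / (1 + w) \<in> unit_disk"
proof -
  have w: "1 + w \<noteq> 0" using assms by (auto simp: complex_eq_iff)
  have "(cmod w)\<^sup>2 < (cmod (1 + w))\<^sup>2"
    using assms unfolding cmod_power2 by (simp add: power2_eq_square algebra_simps)
  hence "cmod w < cmod (1 + w)" by (rule power2_less_imp_less) simp
  with w show ?thesis by (simp add: norm_divide divide_less_eq)
qed

lemma image_div_one_plus_half_plane:
  "(\<lambda>w. w / (1 + w)) ` {w. Re w > -1/2} = unit_disk"
proof (intro equalityI subsetI)
  fix z assume z: "z \<in> unit_disk"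
  hence "1 - z \<noteq> 0" by auto
  hence "z = z / (1 - z) / (1 + z / (1 - z))" by (simp add: field_simps)
  moreover have "z / (1 - z) \<in> {w. Re w > -1/2}" using Re_div_one_minus_gt z by simp
  ultimately show "z \<in> (\<lambda>w. w / (1 + w)) ` {w. Re w > -1/2}" by blast
qed (use div_one_plus_mem_unit_disk in auto)

lemma convex_imp_convex_imag_dir:
  assumes "convex S"
  shows "convex_imag_dir S"
  unfolding convex_imag_dir_def
proof
  fix x :: real
  have "{w. Re w = x} = {w. x \<le> Re w} \<inter> {w. Re w \<le> x}" by auto
  hence "convex {w. Re w = x}"
    by (simp add: convex_Int convex_halfspace_Re_ge convex_halfspace_Re_le)
  thus "connected (S \<inter> {w. Re w = x})" by (intro convex_connected convex_Int assms)
qed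

lemma convex_imag_dir_image:
  assumes "continuous_on S F" "\<And>w. w \<in> S \<Longrightarrow> Re (F w) = Re w" "convex_imag_dir S"
  shows "convex_imag_dir (F ` S)"
  unfolding convex_imag_dir_def
proof
  fix x :: real
  have "F ` S \<inter> {w. Re w = x} = F ` (S \<inter> {w. Re w = x})"
    using assms(2) by auto
  thus "connected (F ` S \<inter> {w. Re w = x})"
    using assms(1,3) unfolding convex_imag_dir_def
    by (metis connected_continuous_image continuous_on_subset inf_le1)
qed

lemma Im_less_on_vertical_segment:
  assumes "convex S"
    and deriv: "\<And>w. w \<in> S \<Longrightarrow> (\<Psi> has_field_derivative \<Psi>' w) (at w)"
    and pos: "\<And>w. w \<in> S \<Longrightarrow> Re (\<Psi>' w) > 0"
    and "w \<in> S" "w' \<in> S" "Re w = Re w'" "Im w < Im w'"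
  shows "Im (\<Psi> w) < Im (\<Psi> w')"
proof -
  define x where "x = Re w"
  define line where "line = (\<lambda>y. complex_of_real x + \<i> * complex_of_real y)"
  have ends: "line (Im w) = w" "line (Im w') = w'"
    using assms(6) by (simp_all add: line_def x_def complex_eq_iff)
  have on_segment: "line y \<in> S" if "Im w \<le> y" "y \<le> Im w'" for y
  proof -
    define u where "u = (y - Im w) / (Im w' - Im w)"
    have "0 \<le> u" "u \<le> 1" using that assms(7) by (simp_all add: u_def field_simps)
    hence "(1 - u) *\<^sub>R w + u *\<^sub>R w' \<in> S"
      using assms(1,4,5) unfolding convex_alt by blast
    moreover have "(1 - u) *\<^sub>R w + u *\<^sub>R w' = line y"
    proof -
      have "u * (Im w' - Im w) = y - Im w" using assms(7) by (simp add: u_def)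
      thus ?thesis using assms(6) by (simp add: complex_eq_iff line_def x_def algebra_simps)
    qed
    ultimately show ?thesis by simp
  qed
  have "Im (\<Psi> (line (Im w))) < Im (\<Psi> (line (Im w')))"
  proof (rule DERIV_pos_imp_increasing[OF assms(7)])
    fix y assume "Im w \<le> y" "y \<le> Im w'"
    hence S: "line y \<in> S" by (rule on_segment)
    have "(line has_vector_derivative \<i>) (at y)"
      unfolding line_def by (auto intro!: derivative_eq_intros)
    from field_vector_diff_chain_at[OF this deriv[OF S]]
    have "((\<lambda>y. Im ((\<Psi> \<circ> line) y)) has_field_derivative Im (\<i> * \<Psi>' (line y))) (at y)"
      by (rule has_field_derivative_Im)
    thus "\<exists>d. ((\<lambda>y. Im (\<Psi> (line y))) has_field_derivative d) (at y) \<and> d > 0"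
      using pos[OF S] by (auto simp: o_def)
  qed
  thus ?thesis by (simp add: ends)
qed

lemma deriv_add_mult_square_eq_one:
  assumes "h holomorphic_on unit_disk" "g holomorphic_on unit_disk"
    and "\<forall>z\<in>unit_disk. h z + g z = z / (1 - z)" "z \<in> unit_disk"
  shows "(deriv h z + deriv g z) * (1 - z)\<^sup>2 = 1"
proof -
  have z: "z \<noteq> 1" using assms(4) by auto
  have "((\<lambda>z. h z + g z) has_field_derivative deriv h z + deriv g z) (at z)"
    using assms by (auto intro!: derivative_intros holomorphic_derivI)
  hence "((\<lambda>z. z / (1 - z)) has_field_derivative deriv h z + deriv g z) (at z)"
    by (rule has_field_derivative_transform_within_open[OF _ open_ball assms(4)])
       (use assms(3) in auto)
  moreover have "((\<lambda>z. z / (1 - z)) has_field_derivative 1 / (1 - z)\<^sup>2) (at z)"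
    using z by (auto intro!: derivative_eq_intros simp: field_simps power2_eq_square)
  ultimately have "deriv h z + deriv g z = 1 / (1 - z)\<^sup>2" by (rule DERIV_unique)
  thus ?thesis using z by (simp add: field_simps)
qed

lemma continuous_on_harm:
  assumes "h holomorphic_on S" "g holomorphic_on S"
  shows "continuous_on S (harm h g)"
  using assms unfolding harm_def
  by (intro continuous_intros) (auto simp: holomorphic_on_imp_continuous_on)

context
  fixes h g :: "complex \<Rightarrow> complex"
  assumes holo_h: "h holomorphic_on unit_disk" and holo_g: "g holomorphic_on unit_disk"
    and sum_eq: "\<forall>z\<in>unit_disk. h z + g z = z / (1 - z)"
    and Re_gt: "\<forall>z\<in>unit_disk. Re (deriv h z * (1 - z)\<^sup>2) > 1/2"
begin

lemma shear_diff_has_derivative: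
  assumes "Re w > -1/2"
  defines "z \<equiv> w / (1 + w)"
  shows "((\<lambda>w. h (w / (1 + w)) - g (w / (1 + w))) has_field_derivative
           2 * (deriv h z * (1 - z)\<^sup>2) - 1) (at w)"
proof -
  have w: "1 + w \<noteq> 0" using assms(1) by (auto simp: complex_eq_iff)
  have z: "z \<in> unit_disk" unfolding z_def by (rule div_one_plus_mem_unit_disk[OF assms(1)])
  have one_minus_z: "1 - z = 1 / (1 + w)" unfolding z_def using w by (simp add: field_simps)
  have "((\<lambda>z. h z - g z) has_field_derivative deriv h z - deriv g z) (at z)"
    using holo_h holo_g z by (auto intro!: derivative_intros holomorphic_derivI)
  moreover have "((\<lambda>w. w / (1 + w)) has_field_derivative (1 - z)\<^sup>2) (at w)"
    unfolding one_minus_z using w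
    by (auto intro!: derivative_eq_intros simp: field_simps power2_eq_square)
  ultimately have "((\<lambda>w. h (w / (1 + w)) - g (w / (1 + w))) has_field_derivative
                     (deriv h z - deriv g z) * (1 - z)\<^sup>2) (at w)"
    unfolding z_def by (rule DERIV_chain2)
  moreover have "(deriv h z - deriv g z) * (1 - z)\<^sup>2 = 2 * (deriv h z * (1 - z)\<^sup>2) - 1"
    using deriv_add_mult_square_eq_one[OF holo_h holo_g sum_eq z]
    by (simp add: algebra_simps)
  ultimately show ?thesis by simp
qed

lemma Re_harm_div_one_plus:
  assumes "Re w > -1/2"
  shows "Re (harm h g (w / (1 + w))) = Re w"
proof -
  define z where "z = w / (1 + w)"
  have "1 + w \<noteq> 0" using assms by (auto simp: complex_eq_iff)
  hence "z / (1 - z) = w" by (simp add: z_def field_simps)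
  have "Re (harm h g z) = Re (h z + g z)" by (simp add: harm_def)
  also have "h z + g z = z / (1 - z)"
    using sum_eq div_one_plus_mem_unit_disk[OF assms] by (simp add: z_def)
  also have "\<dots> = w" by fact
  finally show ?thesis by (simp add: z_def)
qed

lemma Im_harm_div_one_plus_less:
  assumes "Re w > -1/2" "Re w = Re w'" "Im w < Im w'"
  shows "Im (harm h g (w / (1 + w))) < Im (harm h g (w' / (1 + w')))"
proof -
  have "Im (h (w / (1 + w)) - g (w / (1 + w))) < Im (h (w' / (1 + w')) - g (w' / (1 + w')))"
  proof (rule Im_less_on_vertical_segment[OF convex_halfspace_Re_gt shear_diff_has_derivative])
    fix v :: complex assume "v \<in> {v. Re v > -1/2}"
    thus "Re (2 * (deriv h (v / (1 + v)) * (1 - v / (1 + v))\<^sup>2) - 1) > 0"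
      using Re_gt div_one_plus_mem_unit_disk by fastforce
  qed (use assms in simp_all)
  thus ?thesis by (simp add: harm_def)
qed

lemma inj_on_harm: "inj_on (harm h g) unit_disk"
proof -
  have "inj_on (\<lambda>w. harm h g (w / (1 + w))) {w. Re w > -1/2}"
  proof (rule inj_onI)
    fix w w' assume "w \<in> {w. Re w > -1/2}" "w' \<in> {w. Re w > -1/2}"
      and eq: "harm h g (w / (1 + w)) = harm h g (w' / (1 + w'))"
    moreover from this have "Re w = Re w'" by (metis Re_harm_div_one_plus mem_Collect_eq)
    ultimately show "w = w'"
      using Im_harm_div_one_plus_less
      by (metis complex_eq_iff linorder_neqE_linordered_idom less_irrefl mem_Collect_eq)
  qed
  thus ?thesis
    unfolding image_div_one_plus_half_plane[symmetric] by (intro inj_on_imageI) (simp add: o_def)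
qed

lemma convex_imag_dir_harm_image: "convex_imag_dir (harm h g ` unit_disk)"
proof -
  have "convex_imag_dir ((\<lambda>w. harm h g (w / (1 + w))) ` {w. Re w > -1/2})"
  proof (rule convex_imag_dir_image[OF _ Re_harm_div_one_plus])
    show "continuous_on {w. Re w > -1/2} (\<lambda>w. harm h g (w / (1 + w)))"
      using div_one_plus_mem_unit_disk
      by (intro continuous_on_compose2[OF continuous_on_harm[OF holo_h holo_g]] continuous_intros)
         (auto simp: complex_eq_iff)
  qed (auto intro: convex_imp_convex_imag_dir convex_halfspace_Re_gt)
  thus ?thesis unfolding image_div_one_plus_half_plane[symmetric] image_image .
qed

lemma SH_pair_shear:
  assumes "harm h g 0 = 0" "deriv h 0 = 1"
  shows "SH_pair h g"
proof -
  have "deriv h z \<noteq> 0 \<and> cmod (deriv g z / deriv h z) < 1" if "z \<in> unit_disk" for z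
    using dilatation_less_one_iff deriv_add_mult_square_eq_one[OF holo_h holo_g sum_eq that]
      Re_gt that by blast
  thus ?thesis
    unfolding SH_pair_def using holo_h holo_g inj_on_harm assms by blast
qed

end

lemma Re_deriv_mult_square_gt:
  assumes "SH_pair h g" "\<forall>z\<in>unit_disk. h z + g z = z / (1 - z)" "z \<in> unit_disk"
  shows "Re (deriv h z * (1 - z)\<^sup>2) > 1/2"
proof -
  have "h holomorphic_on unit_disk" "g holomorphic_on unit_disk"
    and "deriv h z \<noteq> 0 \<and> cmod (deriv g z / deriv h z) < 1"
    using assms(1,3) unfolding SH_pair_def by auto
  thus ?thesis
    using dilatation_less_one_iff deriv_add_mult_square_eq_one assms(2,3) by blast
qed

lemma deriv_linear_combination:
  fixes f g :: "complex \<Rightarrow> complex"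
  assumes "f holomorphic_on S" "g holomorphic_on S" "open S" "z \<in> S"
  shows "deriv (\<lambda>w. a * f w + b * g w) z = a * deriv f z + b * deriv g z"
  using holomorphic_on_imp_differentiable_at[OF assms(1,3,4)]
    holomorphic_on_imp_differentiable_at[OF assms(2,3,4)]
  by (simp add: deriv_cmult field_differentiable_add field_differentiable_mult)

lemma Re_deriv_convex_comb_mult_square_gt:
  assumes "h1 holomorphic_on unit_disk" "h2 holomorphic_on unit_disk" "z \<in> unit_disk"
    and "Re (deriv h1 z * (1 - z)\<^sup>2) > 1/2" "Re (deriv h2 z * (1 - z)\<^sup>2) > 1/2"
    and "0 \<le> t" "t \<le> 1"
  shows "Re (deriv (\<lambda>z. of_real t * h1 z + of_real (1 - t) * h2 z) z * (1 - z)\<^sup>2) > 1/2"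
proof -
  define q1 where "q1 = deriv h1 z * (1 - z)\<^sup>2"
  define q2 where "q2 = deriv h2 z * (1 - z)\<^sup>2"
  have "deriv (\<lambda>z. of_real t * h1 z + of_real (1 - t) * h2 z) z * (1 - z)\<^sup>2
          = of_real t * q1 + of_real (1 - t) * q2"
    by (simp only: deriv_linear_combination[OF assms(1,2) open_ball assms(3)]
        q1_def q2_def distrib_right mult.assoc)
  hence "Re (deriv (\<lambda>z. of_real t * h1 z + of_real (1 - t) * h2 z) z * (1 - z)\<^sup>2)
           = t * Re q1 + (1 - t) * Re q2"
    by simp
  moreover have "- Re q1 < - 1/2" "- Re q2 < - 1/2"
    using assms(4,5) unfolding q1_def q2_def by simp_all
  ultimately show ?thesis
    using convex_bound_lt[of "- Re q1" "- 1/2" "- Re q2" t "1 - t"] assms(6,7) by simp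
qed

theorem corollary2p4:
  fixes h1 g1 h2 g2 :: "complex \<Rightarrow> complex" and t :: real
  assumes "SH_pair h1 g1" "SH_pair h2 g2"
    and "\<forall>z\<in>unit_disk. h1 z + g1 z = z / (1 - z)"
    and "\<forall>z\<in>unit_disk. h2 z + g2 z = z / (1 - z)"
    and "0 \<le> t" "t \<le> 1"
  defines "f \<equiv> (\<lambda>z. of_real t * harm h1 g1 z + of_real (1 - t) * harm h2 g2 z)"
  shows "f \<in> S_H \<and> open (f ` unit_disk) \<and> connected (f ` unit_disk)
         \<and> convex_imag_dir (f ` unit_disk)"
proof -
  define H where "H = (\<lambda>z. of_real t * h1 z + of_real (1 - t) * h2 z)"
  define G where "G = (\<lambda>z. of_real t * g1 z + of_real (1 - t) * g2 z)"
  have holo_h: "h1 holomorphic_on unit_disk" "h2 holomorphic_on unit_disk"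
    using assms(1,2) unfolding SH_pair_def by auto
  have f_eq: "f = harm H G"
    unfolding f_def H_def G_def harm_def by (simp add: fun_eq_iff algebra_simps)
  have holo: "H holomorphic_on unit_disk" "G holomorphic_on unit_disk"
    using assms(1,2) unfolding H_def G_def SH_pair_def by (auto intro!: holomorphic_intros)
  have sum_eq: "\<forall>z\<in>unit_disk. H z + G z = z / (1 - z)"
    using assms(3,4) by (simp add: H_def G_def algebra_simps flip: distrib_left)
  have Re_gt: "\<forall>z\<in>unit_disk. Re (deriv H z * (1 - z)\<^sup>2) > 1/2"
    unfolding H_def using Re_deriv_convex_comb_mult_square_gt[OF holo_h] assms
      Re_deriv_mult_square_gt by blast
  have "harm H G 0 = 0"
    using assms(1,2) unfolding f_eq[symmetric] f_def SH_pair_def by simp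
  moreover have "deriv H 0 = 1"
    using assms(1,2) deriv_linear_combination[OF holo_h open_ball, of 0 "of_real t" "of_real (1 - t)"]
    unfolding H_def SH_pair_def by simp
  ultimately have "SH_pair H G" by (rule SH_pair_shear[OF holo sum_eq Re_gt])
  moreover note inj_on_harm[OF holo sum_eq Re_gt] convex_imag_dir_harm_image[OF holo sum_eq Re_gt]
    continuous_on_harm[OF holo]
  ultimately show ?thesis
    unfolding f_eq S_H_def
    by (auto intro: invariance_of_domain connected_continuous_image)
qed

end
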